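(* Let $X\in\sigma\mathcal F$ and $F\in\mathsf{age}(X)$. Then $\mathsf{rk}_X(F)=\infty$ if and only if Player II has a winning strategy in the rank game on $X$ starting from $F$.
   Context: Let $\mathcal L$ be a countable relational language without constants and $\mathcal F$ a hereditary, isomorphism-closed class of finite $\mathcal L$-structures. $\sigma\mathcal F$ is the class of countable structures isomorphic to unions of chains in $\mathcal F$; $\mathsf{age}(X)$ is the set of finite (induced) substructures of $X$. For $A\le B$, $B$ is a prime extension of $A$ if $|B\setminus A|=1$; a realization of $B$ in $X$ (where $A\le X$) is $C\le X$ with $A\le C$ and an isomorphism $B\to C$ fixing $A$ pointwise. For $F\in\mathsf{age}(X)$ define by recursion: $\mathsf{rk}_X(F)\ge0$ always; $\mathsf{rk}_X(F)\ge\alpha+1$ iff every prime extension $B\in\mathcal F$ of $F$ has a realization $C$ in $X$ with $\mathsf{rk}_X(C)\ge\alpha$; for limit $\alpha$, $\mathsf{rk}_X(F)\ge\alpha$ iff $\mathsf{rk}_X(F)\ge\beta$ for all $\beta<\alpha$. $\mathsf{rk}_X(F)=\sup\{\alpha:\mathsf{rk}_X(F)\ge\alpha\}$, and $\mathsf{rk}_X(F)=\infty$ if $\mathsf{rk}_X(F)\ge\alpha$ for every ordinal $\alpha$. The rank game on $X$ starting from $F$: players I and II play $\omega$ rounds; the position at round $n$ is $F_n\in\mathsf{age}(X)$ with $F_0=F$. In round $n$, I chooses a prime extension $B\in\mathcal F$ of $F_n$, and II responds with a realization $C$ of $B$ in $X$, setting $F_{n+1}=C$. II loses at round $n$ if no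 realization exists; II wins if the game lasts all $\omega$ rounds. *)

theory Defs
  imports Main "HOL-Library.Countable" "HOL-Library.Countable_Set"
begin

text \<open>A structure is a pair (universe, interpretation);
elements are drawn from nat (so every structure is countable, and every finite structure has
isomorphic copies inside nat).\<close>

type_synonym 'r struct = "nat set \<times> ('r \<Rightarrow> nat list \<Rightarrow> bool)"

definition univ :: "'r struct \<Rightarrow> nat set" where
  "univ S = fst S"

definition rel :: "'r struct \<Rightarrow> 'r \<Rightarrow> nat list \<Rightarrow> bool" where
  "rel S = snd S"

definition wf_struct :: "('r \<Rightarrow> nat) \<Rightarrow> 'r struct \<Rightarrow> bool" where
  "wf_struct ar S \<longleftrightarrow> (\<forall>r xs. rel S r xs \<longrightarrow> length xs = ar r \<and> set xs \<subseteq> univ S)"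

definition substr :: "('r \<Rightarrow> nat) \<Rightarrow> 'r struct \<Rightarrow> 'r struct \<Rightarrow> bool" where
  "substr ar A B \<longleftrightarrow> wf_struct ar A \<and> wf_struct ar B \<and> univ A \<subseteq> univ B \<and>
     (\<forall>r xs. set xs \<subseteq> univ A \<longrightarrow> (rel A r xs \<longleftrightarrow> rel B r xs))"

definition iso :: "('r \<Rightarrow> nat) \<Rightarrow> (nat \<Rightarrow> nat) \<Rightarrow> 'r struct \<Rightarrow> 'r struct \<Rightarrow> bool" where
  "iso ar f A B \<longleftrightarrow> wf_struct ar A \<and> wf_struct ar B \<and> bij_betw f (univ A) (univ B) \<and>
     (\<forall>r xs. set xs \<subseteq> univ A \<longrightarrow> (rel A r xs \<longleftrightarrow> rel B r (map f xs)))"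

definition good_class :: "('r \<Rightarrow> nat) \<Rightarrow> 'r struct set \<Rightarrow> bool" where
  "good_class ar K \<longleftrightarrow>
     (\<forall>S\<in>K. wf_struct ar S \<and> finite (univ S)) \<and>
     (\<forall>S T. S \<in> K \<longrightarrow> substr ar T S \<longrightarrow> T \<in> K) \<and>
     (\<forall>S T f. S \<in> K \<longrightarrow> iso ar f S T \<longrightarrow> T \<in> K)"

definition union_str :: "'r struct set \<Rightarrow> 'r struct" where
  "union_str C = (\<Union>S\<in>C. univ S, \<lambda>r xs. \<exists>S\<in>C. rel S r xs)"

definition is_chain :: "('r \<Rightarrow> nat) \<Rightarrow> 'r struct set \<Rightarrow> bool" where
  "is_chain ar C \<longleftrightarrow> (\<forall>S\<in>C. \<forall>T\<in>C. substr ar S T \<or> substr ar T S)"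

definition sigma_class :: "('r \<Rightarrow> nat) \<Rightarrow> 'r struct set \<Rightarrow> 'r struct set" where
  "sigma_class ar K = {X. wf_struct ar X \<and>
     (\<exists>C f. C \<subseteq> K \<and> is_chain ar C \<and> iso ar f (union_str C) X)}"

definition age :: "('r \<Rightarrow> nat) \<Rightarrow> 'r struct \<Rightarrow> 'r struct set" where
  "age ar X = {F. substr ar F X \<and> finite (univ F)}"

definition prime_ext :: "('r \<Rightarrow> nat) \<Rightarrow> 'r struct set \<Rightarrow> 'r struct \<Rightarrow> 'r struct \<Rightarrow> bool" where
  "prime_ext ar K A B \<longleftrightarrow> B \<in> K \<and> substr ar A B \<and> card (univ B - univ A) = 1"

definition realization ::
  "('r \<Rightarrow> nat) \<Rightarrow> 'r struct \<Rightarrow> 'r struct \<Rightarrow> 'r struct \<Rightarrow> 'r struct \<Rightarrow> bool" where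
  "realization ar X A B C \<longleftrightarrow> substr ar C X \<and> substr ar A C \<and>
     (\<exists>f. iso ar f B C \<and> (\<forall>x\<in>univ A. f x = x))"

text \<open>Ordinals are represented by elements of a well-ordered type 'o.
is_pred \<beta> \<alpha> means \<alpha> = \<beta> + 1.\<close>
definition is_pred :: "'o::wellorder \<Rightarrow> 'o \<Rightarrow> bool" where
  "is_pred \<beta> \<alpha> \<longleftrightarrow> \<beta> < \<alpha> \<and> (\<forall>\<gamma><\<alpha>. \<gamma> \<le> \<beta>)"

lemma the_pred_less:
  assumes "\<exists>\<beta>. is_pred \<beta> \<alpha>" shows "(THE \<beta>. is_pred \<beta> \<alpha>) < \<alpha>"
proof -
  obtain \<beta> where b: "is_pred \<beta> \<alpha>" using assms by blast
  have "\<And>\<gamma>. is_pred \<gamma> \<alpha> \<Longrightarrow> \<gamma> = \<beta>"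
    using b unfolding is_pred_def by (meson antisym)
  hence "(THE \<beta>. is_pred \<beta> \<alpha>) = \<beta>" using b by (rule the_equality[rotated])
  thus ?thesis using b unfolding is_pred_def by simp
qed

text \<open>rk_ge ar K X F \<alpha> means rk_X(F) \<ge> \<alpha>: clause for 0 (vacuously true, as 0 has no
predecessor and nothing below it), successor clause, and limit clause.\<close>
function rk_ge :: "('r \<Rightarrow> nat) \<Rightarrow> 'r struct set \<Rightarrow> 'r struct \<Rightarrow> 'r struct \<Rightarrow> 'o::wellorder \<Rightarrow> bool"
  where
  "rk_ge ar K X F \<alpha> =
    (if (\<exists>\<beta>. is_pred \<beta> \<alpha>)
     then (\<forall>B. prime_ext ar K F B \<longrightarrow>
             (\<exists>C. realization ar X F B C \<and> rk_ge ar K X C (THE \<beta>. is_pred \<beta> \<alpha>)))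
     else (\<forall>\<beta>. \<beta> < \<alpha> \<longrightarrow> rk_ge ar K X F \<beta>))"
  by auto
termination
  by (relation "inv_image {(x, y). x < y} (\<lambda>(ar, K, X, F, \<alpha>). \<alpha>)")
     (auto simp: the_pred_less wf)

definition rk_infinite :: "('r \<Rightarrow> nat) \<Rightarrow> 'r struct set \<Rightarrow> 'r struct \<Rightarrow> 'r struct \<Rightarrow> 'o::wellorder itself \<Rightarrow> bool" where
  "rk_infinite ar K X F _ \<longleftrightarrow> (\<forall>\<alpha>::'o. rk_ge ar K X F \<alpha>)"

text \<open>A strategy for Player II maps the list of Player I's moves so far [B_0,...,B_n] to a
response C_n. Positions along a play: F_0 = F, F_(n+1) = response to [B_0,...,B_n].\<close>
type_synonym 'r strategy = "'r struct list \<Rightarrow> 'r struct"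

definition play_pos :: "'r struct \<Rightarrow> 'r strategy \<Rightarrow> (nat \<Rightarrow> 'r struct) \<Rightarrow> nat \<Rightarrow> 'r struct" where
  "play_pos F \<sigma> bs n = (if n = 0 then F else \<sigma> (map bs [0..<n]))"

definition II_winning :: "('r \<Rightarrow> nat) \<Rightarrow> 'r struct set \<Rightarrow> 'r struct \<Rightarrow> 'r struct \<Rightarrow> 'r strategy \<Rightarrow> bool" where
  "II_winning ar K X F \<sigma> \<longleftrightarrow>
     (\<forall>bs n. (\<forall>k\<le>n. prime_ext ar K (play_pos F \<sigma> bs k) (bs k)) \<longrightarrow>
        realization ar X (play_pos F \<sigma> bs n) (bs n) (play_pos F \<sigma> bs (Suc n)))"

definition II_has_winning_strategy :: "('r \<Rightarrow> nat) \<Rightarrow> 'r struct set \<Rightarrow> 'r struct \<Rightarrow> 'r struct \<Rightarrow> bool" where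
  "II_has_winning_strategy ar K X F \<longleftrightarrow> (\<exists>\<sigma>. II_winning ar K X F \<sigma>)"

end

theory Submission
  imports Defs
begin

text \<open>If II has a winning strategy, every position reached along a legal finite play
against it has rank \<open>\<ge> \<alpha>\<close>, by induction on \<alpha>. Conversely, each finite \<open>C\<close> drops rank
at most once (there is at most one \<delta> with \<open>rk(C) \<ge> \<delta>\<close> but not \<open>rk(C) \<ge> \<delta> + 1\<close>), and
the age of X is countable, so an uncountable ordinal type has a successor level \<delta> + 1
at which no member of the age drops. The members of rank \<open>\<ge> \<delta>\<close> then form a set closed
under realizing prime extensions, which contains every F of infinite rank; II wins by
always answering inside it.\<close>

declare rk_ge.simps[simp del]

lemma the_is_pred_eq:
  assumes "is_pred \<beta> \<alpha>" shows "(THE \<beta>. is_pred \<beta> \<alpha>) = \<beta>"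
proof (rule the_equality)
  show "is_pred \<beta> \<alpha>" by (fact assms)
  show "\<gamma> = \<beta>" if "is_pred \<gamma> \<alpha>" for \<gamma>
    using assms that unfolding is_pred_def by (meson antisym)
qed

lemma rk_ge_succ_iff:
  assumes "is_pred \<beta> \<alpha>"
  shows "rk_ge ar K X F \<alpha> \<longleftrightarrow>
    (\<forall>B. prime_ext ar K F B \<longrightarrow> (\<exists>C. realization ar X F B C \<and> rk_ge ar K X C \<beta>))"
  using assms by (subst rk_ge.simps) (auto simp: the_is_pred_eq)

lemma rk_ge_limit_iff:
  assumes "\<nexists>\<beta>. is_pred \<beta> \<alpha>"
  shows "rk_ge ar K X F \<alpha> \<longleftrightarrow> (\<forall>\<beta><\<alpha>. rk_ge ar K X F \<beta>)"
  using assms by (subst rk_ge.simps) auto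

lemma rk_ge_antimono:
  fixes \<alpha> \<beta> :: "'o::wellorder"
  assumes "rk_ge ar K X F \<alpha>" and "\<beta> \<le> \<alpha>"
  shows "rk_ge ar K X F \<beta>"
proof -
  have "rk_ge ar K X F \<beta>" if "rk_ge ar K X F \<alpha>" "\<beta> < \<alpha>" for \<alpha> \<beta> :: 'o and F
    using that
  proof (induction \<beta> arbitrary: \<alpha> F rule: less_induct)
    case (less \<beta>)
    show ?case
    proof (cases "\<exists>b. is_pred b \<beta>")
      case False
      then show ?thesis
        using less by (simp add: rk_ge_limit_iff)
    next
      case True
      then obtain b where b: "is_pred b \<beta>" ..
      show ?thesis
      proof (cases "\<exists>a. is_pred a \<alpha>")
        case False
        then show ?thesis
          using less.prems by (simp add: rk_ge_limit_iff)
      next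
        case True
        then obtain a where a: "is_pred a \<alpha>" ..
        have "b < a"
          using a b \<open>\<beta> < \<alpha>\<close> unfolding is_pred_def by (meson less_le_trans)
        have "b < \<beta>" using b unfolding is_pred_def by simp
        show ?thesis
          unfolding rk_ge_succ_iff[OF b]
        proof (intro allI impI)
          fix B assume "prime_ext ar K F B"
          then obtain C where "realization ar X F B C" "rk_ge ar K X C a"
            using less.prems(1) unfolding rk_ge_succ_iff[OF a] by blast
          then show "\<exists>C. realization ar X F B C \<and> rk_ge ar K X C b"
            using less.IH[OF \<open>b < \<beta>\<close>] \<open>b < a\<close> by blast
        qed
      qed
    qed
  qed
  then show ?thesis
    using assms by (cases "\<beta> = \<alpha>") auto
qed

definition osucc :: "'o::wellorder \<Rightarrow> 'o" where
  "osucc d = (LEAST x. d < x)"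

lemma is_pred_osucc:
  fixes d x :: "'o::wellorder"
  assumes "d < x" shows "is_pred d (osucc d)"
  unfolding is_pred_def osucc_def
  using LeastI[of "\<lambda>x. d < x", OF assms] not_less_Least[of _ "\<lambda>x. d < x"] by (auto simp: not_less)

lemma osucc_le: "d < e \<Longrightarrow> osucc d \<le> e"
  unfolding osucc_def by (rule Least_le)

lemma rk_drop_unique:
  fixes d e :: "'o::wellorder"
  assumes "rk_ge ar K X C d" "\<not> rk_ge ar K X C (osucc d)"
    and "rk_ge ar K X C e" "\<not> rk_ge ar K X C (osucc e)"
  shows "d = e"
proof (rule ccontr)
  assume "d \<noteq> e"
  then consider "d < e" | "e < d" by fastforce
  then show False
  proof cases
    case 1
    then show False using assms(2,3) rk_ge_antimono osucc_le by blast
  next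
    case 2
    then show False using assms(1,4) rk_ge_antimono osucc_le by blast
  qed
qed

lemma uncountable_non_maximal:
  assumes "\<not> countable (UNIV :: 'o::linorder set)"
  shows "\<not> countable {d::'o. \<exists>x. d < x}"
proof
  assume "countable {d::'o. \<exists>x. d < x}" (is "countable ?NM")
  moreover have "countable (UNIV - ?NM)"
  proof (cases "?NM = UNIV")
    case False
    then obtain m where "m \<notin> ?NM" by blast
    then have "UNIV - ?NM \<subseteq> {m}"
      using linorder_neqE by blast
    then show ?thesis by (rule countable_subset) simp
  qed simp
  ultimately have "countable (?NM \<union> (UNIV - ?NM))" by (rule countable_Un)
  with assms show False by simp
qed

lemma countable_age: "countable (age ar X)"
proof (rule countable_image_inj_on)
  show "countable (univ ` age ar X)"
    by (rule countable_subset[OF _ countable_Collect_finite]) (auto simp: age_def)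
  show "inj_on univ (age ar X)"
  proof (rule inj_onI)
    fix A B assume "A \<in> age ar X" "B \<in> age ar X" and "univ A = univ B"
    then have "substr ar A X" "substr ar B X" by (simp_all add: age_def)
    with \<open>univ A = univ B\<close> have "rel A r xs = rel B r xs" for r xs
      unfolding substr_def wf_struct_def by metis
    then have "snd A = snd B" unfolding rel_def by blast
    with \<open>univ A = univ B\<close> show "A = B" unfolding univ_def by (simp add: prod_eq_iff)
  qed
qed

lemma exists_rk_stable_level:
  fixes A :: "'r struct set"
  assumes "countable A" and "\<not> countable (UNIV :: 'o::wellorder set)"
  shows "\<exists>d e :: 'o. is_pred d e \<and> (\<forall>C\<in>A. rk_ge ar K X C d \<longrightarrow> rk_ge ar K X C e)"
proof -
  define drop where "drop C = (SOME d::'o. rk_ge ar K X C d \<and> \<not> rk_ge ar K X C (osucc d))"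
    for C
  have "countable (drop ` A)" using assms(1) by (rule countable_image)
  then have "\<not> {d::'o. \<exists>x. d < x} \<subseteq> drop ` A"
    using uncountable_non_maximal[OF assms(2)] by (meson countable_subset)
  then obtain d x :: 'o where "d < x" and "d \<notin> drop ` A" by blast
  have "rk_ge ar K X C (osucc d)" if "C \<in> A" "rk_ge ar K X C d" for C
  proof (rule ccontr)
    assume "\<not> rk_ge ar K X C (osucc d)"
    with \<open>rk_ge ar K X C d\<close> have "rk_ge ar K X C (drop C) \<and> \<not> rk_ge ar K X C (osucc (drop C))"
      unfolding drop_def by (rule someI[where x = d, OF conjI])
    then have "drop C = d"
      using rk_drop_unique[OF _ _ \<open>rk_ge ar K X C d\<close> \<open>\<not> rk_ge ar K X C (osucc d)\<close>] by blast
    with \<open>C \<in> A\<close> \<open>d \<notin> drop ` A\<close> show False by blast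
  qed
  with is_pred_osucc[OF \<open>d < x\<close>] show ?thesis by (intro exI[of _ d] exI[of _ "osucc d"]) simp
qed

definition prime_ext_closed :: "('r \<Rightarrow> nat) \<Rightarrow> 'r struct set \<Rightarrow> 'r struct \<Rightarrow> 'r struct set \<Rightarrow> bool"
  where "prime_ext_closed ar K X S \<longleftrightarrow>
    (\<forall>C\<in>S. \<forall>B. prime_ext ar K C B \<longrightarrow> (\<exists>C'. realization ar X C B C' \<and> C' \<in> S))"

lemma realization_in_age:
  assumes "realization ar X A B C" and "finite (univ B)"
  shows "C \<in> age ar X"
proof -
  obtain f where "iso ar f B C" using assms(1) unfolding realization_def by blast
  then have "finite (univ C)"
    using assms(2) bij_betw_finite unfolding iso_def by blast
  with assms(1) show ?thesis unfolding realization_def age_def by simp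
qed

lemma prime_ext_closed_rk_level:
  assumes "good_class ar K" and "is_pred d e"
    and stable: "\<forall>C\<in>age ar X. rk_ge ar K X C d \<longrightarrow> rk_ge ar K X C e"
  shows "prime_ext_closed ar K X {C \<in> age ar X. rk_ge ar K X C d}"
  unfolding prime_ext_closed_def
proof (intro ballI allI impI)
  fix C B
  assume "C \<in> {C \<in> age ar X. rk_ge ar K X C d}" and "prime_ext ar K C B"
  then have "rk_ge ar K X C e" using stable by blast
  with \<open>prime_ext ar K C B\<close> obtain C' where "realization ar X C B C'" "rk_ge ar K X C' d"
    unfolding rk_ge_succ_iff[OF \<open>is_pred d e\<close>] by blast
  moreover have "finite (univ B)"
    using \<open>prime_ext ar K C B\<close> assms(1) unfolding prime_ext_def good_class_def by blast
  ultimately show "\<exists>C'. realization ar X C B C' \<and> C' \<in> {C \<in> age ar X. rk_ge ar K X C d}"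
    using realization_in_age by blast
qed

definition greedy_step :: "('r \<Rightarrow> nat) \<Rightarrow> 'r struct \<Rightarrow> 'r struct set \<Rightarrow> 'r struct \<Rightarrow> 'r struct \<Rightarrow> 'r struct"
  where "greedy_step ar X S C B = (SOME C'. realization ar X C B C' \<and> C' \<in> S)"

lemma greedy_step_realization:
  assumes "prime_ext_closed ar K X S" and "C \<in> S" and "prime_ext ar K C B"
  shows "realization ar X C B (greedy_step ar X S C B) \<and> greedy_step ar X S C B \<in> S"
proof -
  from assms have "\<exists>C'. realization ar X C B C' \<and> C' \<in> S"
    unfolding prime_ext_closed_def by blast
  then show ?thesis unfolding greedy_step_def by (rule someI_ex)
qed

lemma play_pos_greedy_Suc:
  "play_pos F (foldl (greedy_step ar X S) F) bs (Suc n) =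
    greedy_step ar X S (play_pos F (foldl (greedy_step ar X S) F) bs n) (bs n)"
  by (simp add: play_pos_def)

lemma prime_ext_closed_II_winning:
  assumes closed: "prime_ext_closed ar K X S" and "F \<in> S"
  shows "II_winning ar K X F (foldl (greedy_step ar X S) F)"
  unfolding II_winning_def
proof (intro allI impI)
  fix bs n
  let ?pos = "play_pos F (foldl (greedy_step ar X S) F) bs"
  assume legal: "\<forall>k\<le>n. prime_ext ar K (?pos k) (bs k)"
  have "?pos k \<in> S" if "k \<le> n" for k
    using that
  proof (induction k)
    case 0
    then show ?case using \<open>F \<in> S\<close> by (simp add: play_pos_def)
  next
    case (Suc k)
    then have "?pos k \<in> S" and "prime_ext ar K (?pos k) (bs k)"
      using legal by simp_all
    then show ?case
      unfolding play_pos_greedy_Suc using greedy_step_realization[OF closed] by blast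
  qed
  then show "realization ar X (?pos n) (bs n) (?pos (Suc n))"
    unfolding play_pos_greedy_Suc using greedy_step_realization[OF closed] legal by blast
qed

definition hist_pos :: "'r struct \<Rightarrow> 'r strategy \<Rightarrow> 'r struct list \<Rightarrow> 'r struct" where
  "hist_pos F \<sigma> h = (if h = [] then F else \<sigma> h)"

definition legal_hist :: "('r \<Rightarrow> nat) \<Rightarrow> 'r struct set \<Rightarrow> 'r struct \<Rightarrow> 'r strategy \<Rightarrow> 'r struct list \<Rightarrow> bool"
  where "legal_hist ar K F \<sigma> h \<longleftrightarrow>
    (\<forall>k<length h. prime_ext ar K (hist_pos F \<sigma> (take k h)) (h ! k))"

lemma legal_hist_snoc:
  "legal_hist ar K F \<sigma> (h @ [B]) \<longleftrightarrow>
    legal_hist ar K F \<sigma> h \<and> prime_ext ar K (hist_pos F \<sigma> h) B"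
  unfolding legal_hist_def by (auto simp: nth_append less_Suc_eq)

lemma II_winning_response:
  assumes "II_winning ar K X F \<sigma>" and "legal_hist ar K F \<sigma> (h @ [B])"
  shows "realization ar X (hist_pos F \<sigma> h) B (hist_pos F \<sigma> (h @ [B]))"
proof -
  define bs where "bs i = (if i < length h then h ! i else B)" for i
  have prefix: "map bs [0..<k] = take k (h @ [B])" if "k \<le> Suc (length h)" for k
    using that by (intro nth_equalityI) (auto simp: bs_def nth_append)
  have pos: "play_pos F \<sigma> bs k = hist_pos F \<sigma> (take k (h @ [B]))" if "k \<le> Suc (length h)" for k
  proof -
    have "take k (h @ [B]) = [] \<longleftrightarrow> k = 0" by (simp only: take_eq_Nil) simp
    then show ?thesis using prefix[OF that] by (simp add: play_pos_def hist_pos_def)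
  qed
  have "\<forall>k\<le>length h. prime_ext ar K (play_pos F \<sigma> bs k) (bs k)"
  proof (intro allI impI)
    fix k assume "k \<le> length h"
    then have "k < length (h @ [B])" and "bs k = (h @ [B]) ! k"
      by (auto simp: bs_def nth_append)
    moreover have "play_pos F \<sigma> bs k = hist_pos F \<sigma> (take k (h @ [B]))"
      using \<open>k \<le> length h\<close> by (intro pos) simp
    ultimately show "prime_ext ar K (play_pos F \<sigma> bs k) (bs k)"
      using assms(2) unfolding legal_hist_def by (simp only:)
  qed
  with assms(1) have "realization ar X (play_pos F \<sigma> bs (length h)) (bs (length h))
      (play_pos F \<sigma> bs (Suc (length h)))"
    unfolding II_winning_def by blast
  then show ?thesis by (simp add: pos bs_def)
qed

lemma II_winning_rk_ge:
  fixes \<alpha> :: "'o::wellorder"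
  assumes "II_winning ar K X F \<sigma>" and "legal_hist ar K F \<sigma> h"
  shows "rk_ge ar K X (hist_pos F \<sigma> h) \<alpha>"
  using assms(2)
proof (induction \<alpha> arbitrary: h rule: less_induct)
  case (less \<alpha>)
  show ?case
  proof (cases "\<exists>a. is_pred a \<alpha>")
    case False
    then show ?thesis using less by (simp add: rk_ge_limit_iff)
  next
    case True
    then obtain a where a: "is_pred a \<alpha>" ..
    then have "a < \<alpha>" by (simp add: is_pred_def)
    show ?thesis
      unfolding rk_ge_succ_iff[OF a]
    proof (intro allI impI)
      fix B assume "prime_ext ar K (hist_pos F \<sigma> h) B"
      with less.prems have "legal_hist ar K F \<sigma> (h @ [B])" by (simp add: legal_hist_snoc)
      then show "\<exists>C. realization ar X (hist_pos F \<sigma> h) B C \<and> rk_ge ar K X C a"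
        using II_winning_response[OF assms(1)] less.IH[OF \<open>a < \<alpha>\<close>] by blast
    qed
  qed
qed

lemma II_winning_rk_infinite:
  assumes "II_winning ar K X F \<sigma>"
  shows "rk_infinite ar K X F TYPE('o::wellorder)"
proof -
  have "legal_hist ar K F \<sigma> []" by (simp add: legal_hist_def)
  then have "rk_ge ar K X (hist_pos F \<sigma> []) \<alpha>" for \<alpha> :: 'o
    by (rule II_winning_rk_ge[OF assms])
  then show ?thesis by (simp add: rk_infinite_def hist_pos_def)
qed

theorem proposition2p6:
  fixes ar :: "'r::countable \<Rightarrow> nat" and K :: "'r struct set" and X F :: "'r struct"
  assumes "good_class ar K"
    and "\<not> countable (UNIV :: 'o::wellorder set)"
    and "X \<in> sigma_class ar K"
    and "F \<in> age ar X"
  shows "rk_infinite ar K X F TYPE('o) \<longleftrightarrow> II_has_winning_strategy ar K X F"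
proof
  assume "II_has_winning_strategy ar K X F"
  then obtain \<sigma> where "II_winning ar K X F \<sigma>" unfolding II_has_winning_strategy_def ..
  then show "rk_infinite ar K X F TYPE('o)" by (rule II_winning_rk_infinite)
next
  assume "rk_infinite ar K X F TYPE('o)"
  obtain d e :: 'o where "is_pred d e"
    and stable: "\<forall>C\<in>age ar X. rk_ge ar K X C d \<longrightarrow> rk_ge ar K X C e"
    using exists_rk_stable_level[OF countable_age assms(2)] by blast
  let ?S = "{C \<in> age ar X. rk_ge ar K X C d}"
  have "prime_ext_closed ar K X ?S"
    using prime_ext_closed_rk_level[OF assms(1) \<open>is_pred d e\<close> stable] .
  moreover have "F \<in> ?S"
    using \<open>rk_infinite ar K X F TYPE('o)\<close> assms(4) by (simp add: rk_infinite_def)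
  ultimately show "II_has_winning_strategy ar K X F"
    unfolding II_has_winning_strategy_def by (blast intro: prime_ext_closed_II_winning)
qed

end
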